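(* Let $P\subset\mathbb{Z}^2_{\ge0}$ be a B-polytope. Then, after possibly interchanging the two coordinates, one of the following holds: (1) ($B_1$-polytope) exactly one point of $P$ has nonzero second coordinate, this point is $(a,1)$ for some integer $a\ge0$, and $P$ contains at least two points with second coordinate $0$; (2) (border polytope) $P=\{(0,1),(1,1)\}\cup S\cup T$, where $S$ is a nonempty subset of $\{(c,0): c\in\mathbb{Z},\ c\ge1\}$ and $T\subseteq\{(0,0)\}$.
   Context: A $k$-simplex is a set of $k+1$ affinely independent points; a $k$-simplex $S\subset\mathbb{Z}^m_{\ge0}$ is a B-simplex if there is an index $i$ with exactly $k$ vertices in $\{x_i=0\}$ and the remaining vertex having $x_i=1$ (for $k=0$: the point has some coordinate equal to $1$). A B-polytope in $\mathbb{Z}^m_{\ge0}$ is a finite set $P\subset\mathbb{Z}^m_{\ge0}$ whose affine span has dimension $m$ such that every $(m-1)$-simplex with vertices in $P$ either is a B-simplex or has affine span containing the origin. (For $m=2$: every segment joining two distinct points of $P$ either is a B-simplex or lies on a line through the origin.) *)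

theory Defs
  imports Main
begin

type_synonym pt2 = "int \<times> int"

definition coord2 :: "nat \<Rightarrow> pt2 \<Rightarrow> int" where
  "coord2 i p = (if i = 1 then fst p else snd p)"

definition B_simplex2 :: "pt2 \<Rightarrow> pt2 \<Rightarrow> bool" where
  "B_simplex2 p q \<longleftrightarrow> p \<noteq> q \<and>
     (\<exists>i\<in>{1::nat,2}. (coord2 i p = 0 \<and> coord2 i q = 1) \<or> (coord2 i q = 0 \<and> coord2 i p = 1))"

text \<open>The line through distinct p, q contains the origin iff det(p,q) = 0.\<close>
definition line_through_origin2 :: "pt2 \<Rightarrow> pt2 \<Rightarrow> bool" where
  "line_through_origin2 p q \<longleftrightarrow> fst p * snd q - snd p * fst q = 0"

text \<open>The affine span of P has dimension 2: P contains three affinely independent points.\<close>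
definition affine_full2 :: "pt2 set \<Rightarrow> bool" where
  "affine_full2 P \<longleftrightarrow> (\<exists>a\<in>P. \<exists>b\<in>P. \<exists>c\<in>P.
      (fst b - fst a) * (snd c - snd a) - (snd b - snd a) * (fst c - fst a) \<noteq> 0)"

definition B_polytope2 :: "pt2 set \<Rightarrow> bool" where
  "B_polytope2 P \<longleftrightarrow> finite P \<and> (\<forall>p\<in>P. fst p \<ge> 0 \<and> snd p \<ge> 0) \<and> affine_full2 P \<and>
     (\<forall>p\<in>P. \<forall>q\<in>P. p \<noteq> q \<longrightarrow> B_simplex2 p q \<or> line_through_origin2 p q)"

end

theory Submission
  imports Defs
begin

text \<open>A point with both coordinates at least 2 spans no B-simplex, so all other points would
  lie on its line through the origin; hence every point has a coordinate at most 1. A point of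
  height at least 2 and a point of width at least 2 would span neither a B-simplex nor a line
  through the origin, so after swapping coordinates all points have height 0 or 1. Two points
  of height 1 must have first coordinates 0 and 1, so the top row is a single point (a B1-polytope,
  full dimension forcing two points in the bottom row) or is \<open>{(0,1),(1,1)}\<close>; in the latter
  case we get a border polytope, unless \<open>P = {(0,0),(0,1),(1,1)}\<close>, whose swap is a B1-polytope.\<close>

definition B1_polytope2 :: "pt2 set \<Rightarrow> bool" where
  "B1_polytope2 Q \<longleftrightarrow>
     (\<exists>a::int. a \<ge> 0 \<and> {p\<in>Q. snd p \<noteq> 0} = {(a, 1)} \<and> card {p\<in>Q. snd p = 0} \<ge> 2)"

definition border_polytope2 :: "pt2 set \<Rightarrow> bool" where
  "border_polytope2 Q \<longleftrightarrow>
     (\<exists>S T. Q = {(0, 1), (1, 1)} \<union> S \<union> T \<and> S \<noteq> {} \<and>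
        S \<subseteq> {(c, 0) | c::int. c \<ge> 1} \<and> T \<subseteq> {(0, 0)})"

lemma B_simplex2_iff:
  "B_simplex2 p q \<longleftrightarrow> p \<noteq> q \<and> ({fst p, fst q} = {0, 1} \<or> {snd p, snd q} = {0, 1})"
  by (auto simp: B_simplex2_def coord2_def doubleton_eq_iff)

lemma B_simplex2_swap: "B_simplex2 (prod.swap p) (prod.swap q) \<longleftrightarrow> B_simplex2 p q"
  by (auto simp: B_simplex2_iff prod_eq_iff)

lemma line_through_origin2_swap:
  "line_through_origin2 (prod.swap p) (prod.swap q) \<longleftrightarrow> line_through_origin2 p q"
  by (auto simp: line_through_origin2_def algebra_simps)

lemma affine_full2_swap:
  assumes "affine_full2 P"
  shows "affine_full2 (prod.swap ` P)"
proof -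
  obtain a b c where abc: "a \<in> P" "b \<in> P" "c \<in> P"
    and det: "(fst b - fst a) * (snd c - snd a) - (snd b - snd a) * (fst c - fst a) \<noteq> 0"
    using assms unfolding affine_full2_def by blast
  have "(snd b - snd a) * (fst c - fst a) - (fst b - fst a) * (snd c - snd a) \<noteq> 0"
    using det by simp
  then show ?thesis
    unfolding affine_full2_def using abc by force
qed

lemma affine_full2_card_ge3:
  assumes "finite P" "affine_full2 P"
  shows "card P \<ge> 3"
proof -
  obtain a b c where abc: "a \<in> P" "b \<in> P" "c \<in> P"
    and det: "(fst b - fst a) * (snd c - snd a) - (snd b - snd a) * (fst c - fst a) \<noteq> 0"
    using assms(2) unfolding affine_full2_def by blast
  have "a \<noteq> b" "a \<noteq> c" "b \<noteq> c"
    using det by (auto simp: algebra_simps)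
  then have "3 = card {a, b, c}" by simp
  also have "\<dots> \<le> card P"
    using abc assms(1) by (intro card_mono) auto
  finally show ?thesis .
qed

lemma affine_full2_off_line_through_origin:
  assumes "affine_full2 P" "p \<noteq> (0, 0)"
  shows "\<exists>q\<in>P. \<not> line_through_origin2 p q"
proof (rule ccontr)
  assume "\<not> ?thesis"
  then have on_line: "fst p * snd q = snd p * fst q" if "q \<in> P" for q
    using that by (auto simp: line_through_origin2_def)
  obtain a b c where abc: "a \<in> P" "b \<in> P" "c \<in> P"
    and det: "(fst b - fst a) * (snd c - snd a) - (snd b - snd a) * (fst c - fst a) \<noteq> 0"
    using assms(1) unfolding affine_full2_def by blast
  define D where "D = (fst b - fst a) * (snd c - snd a) - (snd b - snd a) * (fst c - fst a)"
  \<comment> \<open>\<open>b - a\<close> and \<open>c - a\<close> are both parallel to \<open>p\<close>\<close>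
  have "fst p * fst p * D = 0" "snd p * snd p * D = 0"
    using on_line[OF abc(1)] on_line[OF abc(2)] on_line[OF abc(3)]
    unfolding D_def by algebra+
  then show False
    using assms(2) det unfolding D_def by (auto simp: prod_eq_iff)
qed

lemma B_polytope2_swap:
  assumes "B_polytope2 P"
  shows "B_polytope2 (prod.swap ` P)"
  using assms unfolding B_polytope2_def
  by (auto simp: affine_full2_swap B_simplex2_swap line_through_origin2_swap)

lemma B_polytope2_pairD:
  assumes "B_polytope2 P" "p \<in> P" "q \<in> P" "p \<noteq> q"
  shows "{fst p, fst q} = {0, 1} \<or> {snd p, snd q} = {0, 1} \<or> fst p * snd q = snd p * fst q"
  using assms unfolding B_polytope2_def B_simplex2_iff line_through_origin2_def by auto

lemma B_polytope2_min_coord_le1: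
  assumes B: "B_polytope2 P" and "p \<in> P"
  shows "fst p \<le> 1 \<or> snd p \<le> 1"
proof (rule ccontr)
  assume big: "\<not> ?thesis"
  have "line_through_origin2 p q" if "q \<in> P" for q
    using B_polytope2_pairD[OF B \<open>p \<in> P\<close> that] big
    by (cases "q = p") (auto simp: line_through_origin2_def doubleton_eq_iff)
  moreover have "affine_full2 P" "p \<noteq> (0, 0)"
    using B big unfolding B_polytope2_def by auto
  ultimately show False
    using affine_full2_off_line_through_origin by blast
qed

lemma B_polytope2_snd_le1_or_fst_le1:
  assumes B: "B_polytope2 P"
  shows "(\<forall>p\<in>P. snd p \<le> 1) \<or> (\<forall>p\<in>P. fst p \<le> 1)"
proof (rule ccontr)
  assume "\<not> ?thesis"
  then obtain p q where p: "p \<in> P" "snd p \<ge> 2" and q: "q \<in> P" "fst q \<ge> 2"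
    by force
  have "fst p \<le> 1" "snd q \<le> 1"
    using B_polytope2_min_coord_le1[OF B p(1)] B_polytope2_min_coord_le1[OF B q(1)] p q
    by auto
  moreover have "fst p \<ge> 0" "snd q \<ge> 0"
    using B p q unfolding B_polytope2_def by auto
  ultimately have "fst p * snd q \<le> 1"
    by (simp add: mult_le_one)
  moreover have "snd p * fst q \<ge> 2 * 2"
    using p q by (intro mult_mono) auto
  moreover have "p \<noteq> q"
    using p q \<open>fst p \<le> 1\<close> by auto
  ultimately show False
    using B_polytope2_pairD[OF B p(1) q(1)] p q by (auto simp: doubleton_eq_iff)
qed

lemma B_polytope2_top_row:
  assumes B: "B_polytope2 P" and low: "\<forall>p\<in>P. snd p \<le> 1"
  shows "(\<exists>a. {p\<in>P. snd p \<noteq> 0} = {(a, 1)}) \<or> {p\<in>P. snd p \<noteq> 0} = {(0, 1), (1, 1)}"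
proof -
  define Y where "Y = {p\<in>P. snd p \<noteq> 0}"
  have full: "affine_full2 P" and nonneg: "\<forall>p\<in>P. snd p \<ge> 0"
    using B unfolding B_polytope2_def by auto
  have snd_Y: "snd p = 1" if "p \<in> Y" for p
  proof -
    have "snd p \<noteq> 0" "snd p \<ge> 0" "snd p \<le> 1"
      using that nonneg low unfolding Y_def by auto
    then show ?thesis by linarith
  qed
  have fst_Y: "fst p \<in> {0, 1}" if "p \<in> Y" "q \<in> Y" "p \<noteq> q" for p q
  proof -
    have "p \<in> P" "q \<in> P"
      using that unfolding Y_def by auto
    moreover have "snd p = 1" "snd q = 1"
      using that snd_Y by blast+
    moreover from this have "fst p \<noteq> fst q"
      using \<open>p \<noteq> q\<close> by (auto simp: prod_eq_iff)
    ultimately show ?thesis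
      using B_polytope2_pairD[OF B _ _ \<open>p \<noteq> q\<close>] by (auto simp: doubleton_eq_iff)
  qed
  obtain p where p: "p \<in> Y"
  proof -
    obtain p where "p \<in> P" "\<not> line_through_origin2 (1, 0) p"
      using affine_full2_off_line_through_origin[OF full, of "(1, 0)"] by auto
    then show thesis
      using that by (simp add: Y_def line_through_origin2_def)
  qed
  show ?thesis
  proof (cases "Y = {p}")
    case True
    then have "Y = {(fst p, 1)}"
      using snd_Y[OF p] by (simp add: prod_eq_iff)
    then show ?thesis
      unfolding Y_def by blast
  next
    case False
    then obtain q where q: "q \<in> Y" "q \<noteq> p"
      using p by blast
    have "Y \<subseteq> {(0, 1), (1, 1)}"
    proof
      fix r assume r: "r \<in> Y"
      have "fst r \<in> {0, 1}"
      proof (cases "r = p")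
        case True
        then show ?thesis using fst_Y[OF p q(1)] q(2) by simp
      next
        case False
        then show ?thesis using fst_Y[OF r p] by simp
      qed
      then show "r \<in> {(0, 1), (1, 1)}"
        using snd_Y[OF r] by (auto simp: prod_eq_iff)
    qed
    moreover have "{p, q} = {(0, 1), (1, 1)}"
      using fst_Y[OF p q(1)] fst_Y[OF q(1) p] q snd_Y[OF p] snd_Y[OF q(1)]
      by (auto simp: prod_eq_iff)
    ultimately show ?thesis
      using p q unfolding Y_def by blast
  qed
qed

lemma B1_polytope2_if_top_row_singleton:
  assumes B: "B_polytope2 P" and top: "{p\<in>P. snd p \<noteq> 0} = {(a, 1)}"
  shows "B1_polytope2 P"
proof -
  have fin: "finite P" and "affine_full2 P" and "(a, 1) \<in> P"
    using B top unfolding B_polytope2_def by auto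
  then have "a \<ge> 0"
    using B unfolding B_polytope2_def by auto
  have "3 \<le> card P"
    using fin \<open>affine_full2 P\<close> by (rule affine_full2_card_ge3)
  also have "card P = card ({p\<in>P. snd p \<noteq> 0} \<union> {p\<in>P. snd p = 0})"
    by (rule arg_cong[where f = card]) blast
  also have "\<dots> \<le> card {p\<in>P. snd p \<noteq> 0} + card {p\<in>P. snd p = 0}"
    by (rule card_Un_le)
  finally show ?thesis
    unfolding B1_polytope2_def using \<open>a \<ge> 0\<close> top by auto
qed

lemma border_polytope2_if_top_row_pair:
  assumes B: "B_polytope2 P" and top: "{p\<in>P. snd p \<noteq> 0} = {(0, 1), (1, 1)}"
  shows "border_polytope2 P \<or> P = {(0, 0), (0, 1), (1, 1)}"
proof -
  define S where "S = {p\<in>P. snd p = 0 \<and> fst p \<noteq> 0}"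
  have P_eq: "P = {(0, 1), (1, 1)} \<union> S \<union> P \<inter> {(0, 0)}"
  proof (intro equalityI subsetI)
    fix p assume p: "p \<in> P"
    consider "snd p \<noteq> 0" | "snd p = 0" "fst p \<noteq> 0" | "p = (0, 0)"
      by (metis prod.collapse)
    then show "p \<in> {(0, 1), (1, 1)} \<union> S \<union> P \<inter> {(0, 0)}"
    proof cases
      case 1
      then have "p \<in> {p\<in>P. snd p \<noteq> 0}" using p by blast
      then show ?thesis unfolding top by blast
    qed (use p in \<open>auto simp: S_def\<close>)
  qed (use top in \<open>auto simp: S_def\<close>)
  show ?thesis
  proof (cases "S = {}")
    case False
    have "S \<subseteq> {(c, 0) | c::int. c \<ge> 1}"
    proof
      fix p assume "p \<in> S"
      moreover have "fst p \<ge> 0"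
        using B \<open>p \<in> S\<close> unfolding S_def B_polytope2_def by auto
      ultimately show "p \<in> {(c, 0) | c::int. c \<ge> 1}"
        unfolding S_def by (auto simp: prod_eq_iff)
    qed
    then show ?thesis
      unfolding border_polytope2_def using P_eq False by blast
  next
    case True
    have "finite {(0::int, 0::int), (0, 1), (1, 1)}" "P \<subseteq> {(0, 0), (0, 1), (1, 1)}"
      using P_eq True by auto
    moreover have "card {(0::int, 0::int), (0, 1), (1, 1)} \<le> card P"
    proof -
      have "3 \<le> card P"
        using affine_full2_card_ge3 B unfolding B_polytope2_def by blast
      then show ?thesis by simp
    qed
    ultimately show ?thesis
      by (simp add: card_seteq)
  qed
qed

lemma B1_polytope2_swap_triangle: "B1_polytope2 (prod.swap ` {(0, 0), (0, 1), (1, 1)})"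
proof -
  have "{p \<in> prod.swap ` {(0, 0), (0, 1), (1, 1)}. snd p \<noteq> 0} = {(1::int, 1::int)}"
    "{p \<in> prod.swap ` {(0, 0), (0, 1), (1, 1)}. snd p = 0} = {(0::int, 0::int), (1, 0)}"
    by auto
  then show ?thesis
    unfolding B1_polytope2_def by auto
qed

lemma B_polytope2_snd_le1_cases:
  assumes B: "B_polytope2 P" and low: "\<forall>p\<in>P. snd p \<le> 1"
  shows "B1_polytope2 P \<or> border_polytope2 P \<or> B1_polytope2 (prod.swap ` P)"
  using B_polytope2_top_row[OF B low] B1_polytope2_if_top_row_singleton[OF B]
    border_polytope2_if_top_row_pair[OF B] B1_polytope2_swap_triangle
  by blast

theorem lemma3p4:
  fixes P :: "(int \<times> int) set"
  assumes "B_polytope2 P"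
  shows "\<exists>\<sigma>\<in>{id, prod.swap}. let Q = \<sigma> ` P in
     (\<exists>a::int. a \<ge> 0 \<and> {p\<in>Q. snd p \<noteq> 0} = {(a, 1)} \<and> card {p\<in>Q. snd p = 0} \<ge> 2)
   \<or> (\<exists>S T. Q = {(0, 1), (1, 1)} \<union> S \<union> T \<and> S \<noteq> {} \<and>
        S \<subseteq> {(c, 0) | c::int. c \<ge> 1} \<and> T \<subseteq> {(0, 0)})"
proof -
  let ?normal = "\<lambda>Q. B1_polytope2 Q \<or> border_polytope2 Q"
  have "?normal P \<or> ?normal (prod.swap ` P)"
  proof (cases "\<forall>p\<in>P. snd p \<le> 1")
    case True
    then show ?thesis
      using B_polytope2_snd_le1_cases[OF assms] by blast
  next
    case False
    then have "\<forall>p\<in>prod.swap ` P. snd p \<le> 1"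
      using B_polytope2_snd_le1_or_fst_le1[OF assms] by auto
    moreover have "prod.swap ` prod.swap ` P = P"
      by (simp add: image_comp)
    ultimately show ?thesis
      using B_polytope2_snd_le1_cases[OF B_polytope2_swap[OF assms]] by metis
  qed
  then show ?thesis
    unfolding B1_polytope2_def border_polytope2_def Let_def by auto
qed

end
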